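(* Suppose Assumptions A1, A2 (SDSD) and A3 hold for the steady state $(x^s,u^s)$ and discount factor $\gamma\in(0,1)$. Define $W(x):=V_\star^\gamma(x)+\lambda(x)$, where $\lambda$ and $\rho\in\mathcal{K}$ are the functions from Assumption A2. Then, for all $x_0\in\mathbb{X}_0$, $W$ is a Lyapunov function for the closed-loop system $x_{k+1}=f(x_k,\pi_\star^\gamma(x_k))$: (a) $W(x)\ge \rho(\|x-x^s\|)$; (b) there exists $\alpha\in\mathcal{K}$ with $W(x)\le \alpha(\|x-x^s\|)$; (c) $W(f(x,\pi_\star^\gamma(x)))-W(x)\le -\rho(\|x-x^s\|)$; and the closed-loop system under the optimal policy $\pi_\star^\gamma$ (equivalently, under an optimal policy of the modified problem with stage cost $\hat L^\gamma$) is asymptotically stable at $x^s$, i.e. there is $\beta\in\mathcal{KL}$ with $\|x_k^{\pi_\star^\gamma}-x^s\|\le\beta(\|x_0-x^s\|,k)$ for all $k\ge0$ and all $x_0\in\mathbb{X}_0$.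
   Context: Setting: discrete-time system $x_+=f(x,u)$ with $x\in\mathbb{R}^{n_x}$, $u\in\mathbb{R}^{n_u}$, stage cost $L(x,u)$, constraint set $\mathbb{Z}:=\{(x,u): h(x,u)\le 0\}$, with the convention $L(x,u)=\infty$ for $(x,u)\notin\mathbb{Z}$, and discount factor $\gamma\in(0,1)$. For a policy $\pi$ (a map $x\mapsto u$) the closed-loop trajectory is $x_{k+1}^\pi=f(x_k^\pi,\pi(x_k^\pi))$, $x_0^\pi=x_0$. $\mathbb{X}_0:=\{x_0:\exists\pi \text{ with } h(x_k^\pi,\pi(x_k^\pi))\le0\ \forall k\ge0\}$ and $\Pi:=\{\pi: h(x_k^\pi,\pi(x_k^\pi))\le 0\ \forall x_0\in\mathbb{X}_0,\forall k\ge 0\}$. The optimal value function is $V_\star^\gamma(x_0):=\min_{\pi\in\Pi}\sum_{k=0}^\infty\gamma^kL(x_k^\pi,\pi(x_k^\pi))$ and $\pi_\star^\gamma$ denotes an optimal policy; it satisfies the Bellman equation $V_\star^\gamma(x)=\min_{\pi\in\Pi}L(x,\pi(x))+\gamma V_\star^\gamma(f(x,\pi(x)))$. $(x^s,u^s)$ is a steady state, $x^s=f(x^s,u^s)$, normalized so that $L(x^s,u^s)=0$. Assumption A1: $\mathbb{Z}$ and $\mathbb{X}_0$ are compact and $|L(x,u)|<\infty$ for all $(x,u)\in\mathbb{Z}$. Assumption A2 (Strong Discounted Strict Dissipativity, SDSD): there exist a function $\lambda$, continuous at $x^s$, bounded on bounded sets, with $\lambda(x^s)=0$, and $\rho\in\mathcal{K}$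 such that for all $(x,u)\in\mathbb{Z}$: (i) $L(x,u)+\lambda(x)-\gamma\lambda(f(x,u))\ge\rho(\|x-x^s\|)$; (ii) $L(x,u)+\lambda(x)-\lambda(f(x,u))+(\gamma-1)V_\star^\gamma(f(x,u))\ge\rho(\|x-x^s\|)$. Assumption A3: $V_\star^\gamma$ is continuous at $x^s$ and bounded on $\mathbb{X}_0$. Modified cost: $\hat L^\gamma(x,u):=L(x,u)+\lambda(x)-\gamma\lambda(f(x,u))$; it is known (for bounded $\lambda$) that the discounted problem with stage cost $\hat L^\gamma$ has the same optimal policies as the original one and optimal value $V_\star^\gamma+\lambda$. Comparison functions: $\mathcal{K}$ = continuous, strictly increasing $\alpha:\mathbb{R}_{\ge0}\to\mathbb{R}_{\ge0}$ with $\alpha(0)=0$; $\mathcal{L}$ = continuous strictly decreasing functions tending to $0$; $\mathcal{KL}$ = continuous $\beta(s,t)$ with $\beta(\cdot,t)\in\mathcal{K}$ and $\beta(s,\cdot)\in\mathcal{L}$. *)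

theory Defs
  imports "HOL-Analysis.Analysis"
begin

definition class_K :: "(real \<Rightarrow> real) \<Rightarrow> bool" where
  "class_K \<alpha> \<longleftrightarrow> continuous_on {0..} \<alpha> \<and> strict_mono_on {0..} \<alpha> \<and> \<alpha> 0 = 0"

definition class_L :: "(real \<Rightarrow> real) \<Rightarrow> bool" where
  "class_L \<sigma> \<longleftrightarrow> continuous_on {0..} \<sigma>
      \<and> (\<forall>t1 t2. 0 \<le> t1 \<longrightarrow> t1 < t2 \<longrightarrow> \<sigma> t2 < \<sigma> t1)
      \<and> (\<sigma> \<longlongrightarrow> 0) at_top"

definition class_KL :: "(real \<Rightarrow> real \<Rightarrow> real) \<Rightarrow> bool" where
  "class_KL \<beta> \<longleftrightarrow> continuous_on ({0..} \<times> {0..}) (\<lambda>(s, t). \<beta> s t)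
      \<and> (\<forall>t\<ge>0. class_K (\<lambda>s. \<beta> s t))
      \<and> (\<forall>s>0. class_L (\<lambda>t. \<beta> s t))"

definition traj :: "('x \<Rightarrow> 'u \<Rightarrow> 'x) \<Rightarrow> ('x \<Rightarrow> 'u) \<Rightarrow> 'x \<Rightarrow> nat \<Rightarrow> 'x" where
  "traj f p x0 k = ((\<lambda>x. f x (p x)) ^^ k) x0"

definition Zset :: "('x \<Rightarrow> 'u \<Rightarrow> 'c::{ord,zero}) \<Rightarrow> ('x \<times> 'u) set" where
  "Zset h = {(x, u). h x u \<le> 0}"

definition feasible_from ::
  "('x \<Rightarrow> 'u \<Rightarrow> 'x) \<Rightarrow> ('x \<Rightarrow> 'u \<Rightarrow> 'c::{ord,zero}) \<Rightarrow> ('x \<Rightarrow> 'u) \<Rightarrow> 'x \<Rightarrow> bool" where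
  "feasible_from f h p x0 \<longleftrightarrow> (\<forall>k. h (traj f p x0 k) (p (traj f p x0 k)) \<le> 0)"

definition X0set :: "('x \<Rightarrow> 'u \<Rightarrow> 'x) \<Rightarrow> ('x \<Rightarrow> 'u \<Rightarrow> 'c::{ord,zero}) \<Rightarrow> 'x set" where
  "X0set f h = {x0. \<exists>p. feasible_from f h p x0}"

definition Pi_set :: "('x \<Rightarrow> 'u \<Rightarrow> 'x) \<Rightarrow> ('x \<Rightarrow> 'u \<Rightarrow> 'c::{ord,zero}) \<Rightarrow> ('x \<Rightarrow> 'u) set" where
  "Pi_set f h = {p. \<forall>x0 \<in> X0set f h. feasible_from f h p x0}"

definition cost_terms ::
  "real \<Rightarrow> ('x \<Rightarrow> 'u \<Rightarrow> real) \<Rightarrow> ('x \<Rightarrow> 'u \<Rightarrow> 'x) \<Rightarrow> ('x \<Rightarrow> 'u) \<Rightarrow> 'x \<Rightarrow> nat \<Rightarrow> real" where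
  "cost_terms \<gamma> L f p x0 k = \<gamma> ^ k * L (traj f p x0 k) (p (traj f p x0 k))"

definition cost ::
  "real \<Rightarrow> ('x \<Rightarrow> 'u \<Rightarrow> real) \<Rightarrow> ('x \<Rightarrow> 'u \<Rightarrow> 'x) \<Rightarrow> ('x \<Rightarrow> 'u) \<Rightarrow> 'x \<Rightarrow> real" where
  "cost \<gamma> L f p x0 = (\<Sum>k. cost_terms \<gamma> L f p x0 k)"

text \<open>Optimal value V_star^gamma(x0) for x0 in X0: infimum over admissible policies of the
  (finite) discounted cost; policies with divergent cost have cost +infinity and are ignored.\<close>
definition Vstar ::
  "real \<Rightarrow> ('x \<Rightarrow> 'u \<Rightarrow> real) \<Rightarrow> ('x \<Rightarrow> 'u \<Rightarrow> 'x) \<Rightarrow> ('x \<Rightarrow> 'u \<Rightarrow> 'c::{ord,zero}) \<Rightarrow> 'x \<Rightarrow> real" where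
  "Vstar \<gamma> L f h x0 =
     Inf {cost \<gamma> L f p x0 | p. p \<in> Pi_set f h \<and> summable (cost_terms \<gamma> L f p x0)}"

definition optimal_policy ::
  "real \<Rightarrow> ('x \<Rightarrow> 'u \<Rightarrow> real) \<Rightarrow> ('x \<Rightarrow> 'u \<Rightarrow> 'x) \<Rightarrow> ('x \<Rightarrow> 'u \<Rightarrow> 'c::{ord,zero}) \<Rightarrow> ('x \<Rightarrow> 'u) \<Rightarrow> bool" where
  "optimal_policy \<gamma> L f h p \<longleftrightarrow> p \<in> Pi_set f h \<and>
     (\<forall>x0 \<in> X0set f h. summable (cost_terms \<gamma> L f p x0) \<and>
        (\<forall>p' \<in> Pi_set f h. summable (cost_terms \<gamma> L f p' x0) \<longrightarrow>
            cost \<gamma> L f p x0 \<le> cost \<gamma> L f p' x0))"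

end

(*
  Along any admissible trajectory the rotated stage cost L + lam - gamma lam(f) is at least
  rho(|x - xs|) by SDSD (i); its discounted sum telescopes to the cost plus lam(x0), so
  W = V + lam is bounded below by rho. The Bellman equation combined with SDSD (ii) gives the
  decrease of W along the optimal closed loop, and continuity of W at the steady state, where
  W vanishes, together with boundedness yields a class K upper bound.

  Stability is the standard Lyapunov argument: as long as the state stays outside a ball,
  W stays above a positive level, so each step lowers W by a fixed amount; since W starts
  below alpha(|x0 - xs|), after k steps the state lies in any prescribed ball once
  alpha(|x0 - xs|)/(k + 1) is small. A class K majorant of this relation gives the KL bound
  beta(s, t) = G(alpha(s)/(t + 1)).
*)
theory Submission
  imports Defs
begin

lemma class_K_less: "class_K \<alpha> \<Longrightarrow> 0 \<le> r \<Longrightarrow> r < s \<Longrightarrow> \<alpha> r < \<alpha> s"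
  unfolding class_K_def by (auto intro: strict_mono_onD)

lemma class_K_mono: "class_K \<alpha> \<Longrightarrow> 0 \<le> r \<Longrightarrow> r \<le> s \<Longrightarrow> \<alpha> r \<le> \<alpha> s"
  using class_K_less[of \<alpha> r s] by (cases "r = s") auto

lemma class_K_nonneg: "class_K \<alpha> \<Longrightarrow> 0 \<le> r \<Longrightarrow> 0 \<le> \<alpha> r"
  using class_K_mono[of \<alpha> 0 r] unfolding class_K_def by auto

lemma class_K_pos: "class_K \<alpha> \<Longrightarrow> 0 < r \<Longrightarrow> 0 < \<alpha> r"
  using class_K_less[of \<alpha> 0 r] unfolding class_K_def by auto

lemma class_K_small_arg:
  assumes "class_K \<alpha>" "0 < \<eta>"
  shows "\<exists>\<theta>>0. \<alpha> \<theta> < \<eta>"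
proof -
  have "continuous (at 0 within {0..}) \<alpha>" "\<alpha> 0 = 0"
    using assms(1) unfolding class_K_def by (auto simp: continuous_on_eq_continuous_within)
  then obtain d where "d > 0" "\<forall>x\<in>{0..}. dist x 0 < d \<longrightarrow> dist (\<alpha> x) 0 < \<eta>"
    using assms(2) unfolding continuous_within_eps_delta by metis
  then have "\<alpha> (d/2) < \<eta>"
    by (auto simp: dist_real_def dest!: bspec[of _ _ "d/2"])
  then show ?thesis
    using \<open>d > 0\<close> by (intro exI[of _ "d/2"]) auto
qed

definition affine_majorants :: "(real \<times> real) set \<Rightarrow> (real \<times> real) set" where
  "affine_majorants P = {(a, b). 0 \<le> a \<and> 0 \<le> b \<and> (\<forall>(u, y) \<in> P. y \<le> a + b * u)}"

definition affine_envelope :: "(real \<times> real) set \<Rightarrow> real \<Rightarrow> real" where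
  "affine_envelope P r = Inf ((\<lambda>(a, b). a + b * r) ` affine_majorants P)"

lemma affine_envelope_le:
  assumes "(a, b) \<in> affine_majorants P" "0 \<le> r"
  shows "affine_envelope P r \<le> a + b * r"
  unfolding affine_envelope_def
proof (rule cInf_lower)
  show "bdd_below ((\<lambda>(a, b). a + b * r) ` affine_majorants P)"
    using assms(2) by (auto simp: bdd_below_def affine_majorants_def intro!: exI[of _ 0])
qed (use assms(1) in force)

lemma affine_envelope_greatest:
  assumes "affine_majorants P \<noteq> {}" "\<And>a b. (a, b) \<in> affine_majorants P \<Longrightarrow> z \<le> a + b * r"
  shows "z \<le> affine_envelope P r"
  unfolding affine_envelope_def using assms by (intro cInf_greatest) auto

lemma affine_envelope_nonneg:
  "affine_majorants P \<noteq> {} \<Longrightarrow> 0 \<le> r \<Longrightarrow> 0 \<le> affine_envelope P r"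
  by (rule affine_envelope_greatest) (auto simp: affine_majorants_def)

lemma affine_envelope_upper:
  "affine_majorants P \<noteq> {} \<Longrightarrow> (u, y) \<in> P \<Longrightarrow> y \<le> affine_envelope P u"
  by (rule affine_envelope_greatest) (auto simp: affine_majorants_def)

lemma affine_envelope_mono:
  assumes "affine_majorants P \<noteq> {}" "0 \<le> r" "r \<le> s"
  shows "affine_envelope P r \<le> affine_envelope P s"
proof (rule affine_envelope_greatest[OF assms(1)])
  fix a b assume ab: "(a, b) \<in> affine_majorants P"
  then have "a + b * r \<le> a + b * s"
    using assms by (auto simp: affine_majorants_def intro: mult_left_mono)
  then show "affine_envelope P r \<le> a + b * s"
    using affine_envelope_le[OF ab assms(2)] by linarith
qed

lemma affine_envelope_concave:
  assumes "affine_majorants P \<noteq> {}"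
  shows "concave_on {0..} (affine_envelope P)"
  unfolding concave_on_iff
proof (intro conjI convex_real_interval ballI allI impI)
  fix r s u v :: real
  assume rs: "r \<in> {0..}" "s \<in> {0..}" and uv: "0 \<le> u" "0 \<le> v" "u + v = 1"
  show "u * affine_envelope P r + v * affine_envelope P s \<le> affine_envelope P (u *\<^sub>R r + v *\<^sub>R s)"
  proof (rule affine_envelope_greatest[OF assms])
    fix a b assume ab: "(a, b) \<in> affine_majorants P"
    have "u * affine_envelope P r + v * affine_envelope P s \<le> u * (a + b * r) + v * (a + b * s)"
      using rs uv by (intro add_mono mult_left_mono affine_envelope_le[OF ab]) auto
    also have "\<dots> = (u + v) * a + b * (u *\<^sub>R r + v *\<^sub>R s)"
      by (simp add: algebra_simps)
    also have "\<dots> = a + b * (u *\<^sub>R r + v *\<^sub>R s)"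
      using uv by simp
    finally show "u * affine_envelope P r + v * affine_envelope P s \<le> a + b * (u *\<^sub>R r + v *\<^sub>R s)" .
  qed
qed

lemma affine_envelope_small_near_0:
  assumes small: "\<And>\<epsilon>. 0 < \<epsilon> \<Longrightarrow> \<exists>b. (\<epsilon>, b) \<in> affine_majorants P" and "0 < \<epsilon>"
  shows "\<exists>d>0. \<forall>r. 0 \<le> r \<and> r < d \<longrightarrow> affine_envelope P r < \<epsilon>"
proof -
  obtain b where b: "(\<epsilon>/2, b) \<in> affine_majorants P" using small[of "\<epsilon>/2"] \<open>0 < \<epsilon>\<close> by auto
  then have "0 \<le> b" by (simp add: affine_majorants_def)
  have "affine_envelope P r < \<epsilon>" if "0 \<le> r" "r < \<epsilon> / (2 * (b + 1))" for r
  proof -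
    have "b * r \<le> b * (\<epsilon> / (2 * (b + 1)))" using \<open>0 \<le> b\<close> that by (intro mult_left_mono) auto
    also have "\<dots> < \<epsilon> / 2" using \<open>0 \<le> b\<close> \<open>0 < \<epsilon>\<close> by (simp add: field_simps)
    finally show ?thesis using affine_envelope_le[OF b \<open>0 \<le> r\<close>] by linarith
  qed
  then show ?thesis using \<open>0 \<le> b\<close> \<open>0 < \<epsilon>\<close> by (intro exI[of _ "\<epsilon> / (2 * (b + 1))"]) auto
qed

lemma affine_envelope_continuous:
  assumes ne: "affine_majorants P \<noteq> {}"
    and small: "\<And>\<epsilon>. 0 < \<epsilon> \<Longrightarrow> \<exists>b. (\<epsilon>, b) \<in> affine_majorants P"
  shows "affine_envelope P 0 = 0" "continuous_on {0..} (affine_envelope P)"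
proof -
  note near_0 = affine_envelope_small_near_0[OF small]
  have "affine_envelope P 0 \<le> 0"
  proof (rule field_le_epsilon)
    fix \<epsilon> :: real assume "0 < \<epsilon>"
    then show "affine_envelope P 0 \<le> 0 + \<epsilon>" using near_0[of \<epsilon>] by fastforce
  qed
  then show zero: "affine_envelope P 0 = 0"
    using affine_envelope_nonneg[OF ne, of 0] by simp
  have "continuous (at r within {0..}) (affine_envelope P)" if "0 \<le> r" for r
  proof (cases "r = 0")
    case True
    show ?thesis
      unfolding True continuous_within_eps_delta zero
    proof (intro allI impI)
      fix \<epsilon> :: real assume "0 < \<epsilon>"
      then obtain d where "0 < d" "\<forall>r. 0 \<le> r \<and> r < d \<longrightarrow> affine_envelope P r < \<epsilon>"
        using near_0 by blast
      then show "\<exists>d>0. \<forall>r\<in>{0..}. dist r 0 < d \<longrightarrow> dist (affine_envelope P r) 0 < \<epsilon>"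
        using affine_envelope_nonneg[OF ne] by (auto simp: dist_real_def)
    qed
  next
    case False
    have "convex_on {0<..} (\<lambda>r. - affine_envelope P r)"
      using affine_envelope_concave[OF ne] unfolding concave_on_def
      by (rule convex_on_subset) auto
    then have "continuous_on {0<..} (\<lambda>r. - affine_envelope P r)"
      by (rule convex_on_continuous[rotated]) simp
    then have "continuous (at r) (\<lambda>r. - affine_envelope P r)"
      using False that by (auto simp: continuous_on_eq_continuous_at)
    then show ?thesis
      using continuous_minus[of "at r" "\<lambda>r. - affine_envelope P r"]
      by (auto intro: continuous_at_imp_continuous_within)
  qed
  then show "continuous_on {0..} (affine_envelope P)"
    unfolding continuous_on_eq_continuous_within by simp
qed

text \<open>The majorant is r + c r, where c is the infimum of all nonnegative affine
  majorants a + b u of the relation.\<close>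
lemma class_K_majorant:
  fixes P :: "(real \<times> real) set"
  assumes bounded: "\<And>u y. (u, y) \<in> P \<Longrightarrow> 0 \<le> u \<and> y \<le> M"
    and small: "\<And>\<epsilon>. 0 < \<epsilon> \<Longrightarrow> \<exists>\<delta>>0. \<forall>(u, y) \<in> P. u < \<delta> \<longrightarrow> y \<le> \<epsilon>"
  shows "\<exists>\<alpha>. class_K \<alpha> \<and> (\<forall>(u, y) \<in> P. y \<le> \<alpha> u)"
proof -
  define M' where "M' = max M 0"
  have "(M', 0) \<in> affine_majorants P"
    using bounded by (fastforce simp: affine_majorants_def M'_def)
  then have ne: "affine_majorants P \<noteq> {}" by blast
  have eps: "\<exists>b. (\<epsilon>, b) \<in> affine_majorants P" if \<epsilon>: "0 < \<epsilon>" for \<epsilon>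
  proof -
    obtain \<delta> where \<delta>: "0 < \<delta>" "\<forall>(u, y) \<in> P. u < \<delta> \<longrightarrow> y \<le> \<epsilon>"
      using small[OF \<epsilon>] by blast
    have "y \<le> \<epsilon> + M' / \<delta> * u" if "(u, y) \<in> P" for u y
    proof (cases "u < \<delta>")
      case True
      then have "y \<le> \<epsilon>" using \<delta>(2) that by blast
      moreover have "0 \<le> M' / \<delta> * u" using \<delta>(1) bounded[OF that] by (simp add: M'_def)
      ultimately show ?thesis by linarith
    next
      case False
      then have "M' / \<delta> * \<delta> \<le> M' / \<delta> * u"
        using \<delta>(1) by (intro mult_left_mono) (auto simp: M'_def)
      then have "M' \<le> M' / \<delta> * u" using \<delta>(1) by simp
      then show ?thesis using bounded[OF that] \<open>0 < \<epsilon>\<close> by (simp add: M'_def)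
    qed
    then have "(\<epsilon>, M' / \<delta>) \<in> affine_majorants P"
      using \<open>0 < \<epsilon>\<close> \<delta> by (auto simp: affine_majorants_def M'_def)
    then show ?thesis ..
  qed
  define \<alpha> where "\<alpha> r = r + affine_envelope P r" for r
  have "class_K \<alpha>"
    unfolding class_K_def
  proof (intro conjI strict_mono_onI)
    show "continuous_on {0..} \<alpha>"
      unfolding \<alpha>_def by (intro continuous_intros affine_envelope_continuous ne eps)
    show "\<alpha> 0 = 0" unfolding \<alpha>_def using affine_envelope_continuous(1)[OF ne eps] by simp
    show "\<alpha> r < \<alpha> s" if "r \<in> {0..}" "s \<in> {0..}" "r < s" for r s
      using that affine_envelope_mono[OF ne, of r s] by (simp add: \<alpha>_def)
  qed
  moreover have "\<forall>(u, y) \<in> P. y \<le> \<alpha> u"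
    using bounded affine_envelope_upper[OF ne] by (fastforce simp: \<alpha>_def)
  ultimately show ?thesis by blast
qed

lemma class_K_bound_at_continuity_point:
  fixes g :: "'a::real_normed_vector \<Rightarrow> real"
  assumes cont: "continuous (at x0 within S) g" and "g x0 = 0" and "bounded (g ` S)"
  shows "\<exists>\<alpha>. class_K \<alpha> \<and> (\<forall>x \<in> S. g x \<le> \<alpha> (norm (x - x0)))"
proof -
  obtain M where M: "\<And>x. x \<in> S \<Longrightarrow> g x \<le> M"
    using \<open>bounded (g ` S)\<close> unfolding bounded_real by (meson abs_le_D1 imageI)
  define P where "P = {(norm (x - x0), g x) | x. x \<in> S}"
  have "\<exists>\<alpha>. class_K \<alpha> \<and> (\<forall>(u, y) \<in> P. y \<le> \<alpha> u)"
  proof (rule class_K_majorant)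
    show "0 \<le> u \<and> y \<le> M" if "(u, y) \<in> P" for u y
      using that M by (auto simp: P_def)
    show "\<exists>\<delta>>0. \<forall>(u, y) \<in> P. u < \<delta> \<longrightarrow> y \<le> \<epsilon>" if "0 < \<epsilon>" for \<epsilon>
    proof -
      obtain \<delta> where "0 < \<delta>" "\<forall>x \<in> S. dist x x0 < \<delta> \<longrightarrow> dist (g x) (g x0) < \<epsilon>"
        using cont \<open>0 < \<epsilon>\<close> unfolding continuous_within_eps_delta by blast
      then show ?thesis
        using \<open>g x0 = 0\<close> by (force simp: P_def dist_norm)
    qed
  qed
  then show ?thesis by (auto simp: P_def)
qed

lemma class_K_comp_scaled:
  assumes G: "class_K G" and \<alpha>: "class_K \<alpha>" and c: "0 < c"
  shows "class_K (\<lambda>s. G (\<alpha> s / c))"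
  unfolding class_K_def
proof (intro conjI strict_mono_onI)
  have Gc: "continuous_on {0..} G" and \<alpha>c: "continuous_on {0..} \<alpha>"
    using G \<alpha> unfolding class_K_def by simp_all
  have "continuous_on {0..} (\<lambda>s. \<alpha> s / c)"
    by (rule continuous_on_divide[OF \<alpha>c continuous_on_const]) (use c in simp)
  moreover have "(\<lambda>s. \<alpha> s / c) ` {0..} \<subseteq> {0..}"
    using c by (auto intro!: divide_nonneg_pos class_K_nonneg[OF \<alpha>])
  ultimately show "continuous_on {0..} (\<lambda>s. G (\<alpha> s / c))"
    by (rule continuous_on_compose2[OF Gc])
  show "G (\<alpha> 0 / c) = 0" using G \<alpha> unfolding class_K_def by simp
  show "G (\<alpha> r / c) < G (\<alpha> s / c)" if "r \<in> {0..}" "s \<in> {0..}" "r < s" for r s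
  proof (rule class_K_less[OF G])
    show "0 \<le> \<alpha> r / c" using that class_K_nonneg[OF \<alpha>] c by simp
    show "\<alpha> r / c < \<alpha> s / c"
      using that class_K_less[OF \<alpha>] c by (simp add: divide_strict_right_mono)
  qed
qed

lemma class_L_comp_decay:
  assumes G: "class_K G" and c: "0 < c"
  shows "class_L (\<lambda>t. G (c / (t + 1)))"
  unfolding class_L_def
proof (intro conjI allI impI)
  have Gc: "continuous_on {0..} G" and G0: "G 0 = 0" using G unfolding class_K_def by auto
  have decay_nonneg: "(\<lambda>t. c / (t + 1)) ` {0..} \<subseteq> {0..}" using c by auto
  show "continuous_on {0..} (\<lambda>t. G (c / (t + 1)))"
    using c by (intro continuous_on_compose2[OF Gc _ decay_nonneg] continuous_on_divide
        continuous_on_add continuous_on_id continuous_on_const) auto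
  show "G (c / (t2 + 1)) < G (c / (t1 + 1))" if "0 \<le> t1" "t1 < t2" for t1 t2
  proof (rule class_K_less[OF G])
    show "0 \<le> c / (t2 + 1)" using that c by simp
    show "c / (t2 + 1) < c / (t1 + 1)" using that c by (simp add: divide_strict_left_mono)
  qed
  have "filterlim (\<lambda>t::real. t + 1) at_top at_top"
    using filterlim_tendsto_add_at_top[OF tendsto_const[of 1] filterlim_ident] by (simp add: add.commute)
  then have "((\<lambda>t::real. c / (t + 1)) \<longlongrightarrow> 0) at_top"
    by (intro tendsto_divide_0[OF tendsto_const] filterlim_at_top_imp_at_infinity)
  moreover have "\<forall>\<^sub>F t in at_top. c / (t + 1) \<in> {0..}"
    using eventually_ge_at_top[of "0::real"] by eventually_elim (use c in auto)
  ultimately show "((\<lambda>t. G (c / (t + 1))) \<longlongrightarrow> 0) at_top"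
    using continuous_on_tendsto_compose[OF Gc] G0 by fastforce
qed

lemma class_KL_comp_decay:
  assumes G: "class_K G" and \<alpha>: "class_K \<alpha>"
  shows "class_KL (\<lambda>s t. G (\<alpha> s / (t + 1)))"
  unfolding class_KL_def
proof (intro conjI allI impI)
  have Gc: "continuous_on {0..} G" and \<alpha>c: "continuous_on {0..} \<alpha>"
    using assms unfolding class_K_def by auto
  have "continuous_on ({0..} \<times> {0..}) (\<lambda>p::real \<times> real. \<alpha> (fst p))"
    by (rule continuous_on_compose2[OF \<alpha>c continuous_on_fst[OF continuous_on_id]]) auto
  then have "continuous_on ({0..} \<times> {0..}) (\<lambda>p::real \<times> real. \<alpha> (fst p) / (snd p + 1))"
    by (intro continuous_on_divide continuous_on_add continuous_on_snd continuous_on_id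
        continuous_on_const) auto
  moreover have "(\<lambda>p::real \<times> real. \<alpha> (fst p) / (snd p + 1)) ` ({0..} \<times> {0..}) \<subseteq> {0..}"
    by (auto intro!: divide_nonneg_pos class_K_nonneg[OF \<alpha>])
  ultimately show "continuous_on ({0..} \<times> {0..}) (\<lambda>(s, t). G (\<alpha> s / (t + 1)))"
    unfolding case_prod_beta by (rule continuous_on_compose2[OF Gc])
  show "class_K (\<lambda>s. G (\<alpha> s / (t + 1)))" if "0 \<le> t" for t
    using that by (intro class_K_comp_scaled G \<alpha>) auto
  show "class_L (\<lambda>t. G (\<alpha> s / (t + 1)))" if "0 < s" for s
    using that by (intro class_L_comp_decay G class_K_pos[OF \<alpha>])
qed

lemma funpow_in_invariant_set:
  "(\<And>x. x \<in> X \<Longrightarrow> F x \<in> X) \<Longrightarrow> x \<in> X \<Longrightarrow> (F ^^ n) x \<in> X"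
  by (induction n) auto

lemma lyapunov_decrease_sum:
  fixes F :: "'a::real_normed_vector \<Rightarrow> 'a" and W :: "'a \<Rightarrow> real" and \<rho> :: "real \<Rightarrow> real"
  assumes invariant: "\<And>x. x \<in> X \<Longrightarrow> F x \<in> X"
    and dec: "\<And>x. x \<in> X \<Longrightarrow> W (F x) - W x \<le> - \<rho> (norm (x - xs))"
    and "x \<in> X"
  shows "W ((F ^^ n) x) + (\<Sum>j<n. \<rho> (norm ((F ^^ j) x - xs))) \<le> W x"
proof (induction n)
  case (Suc n)
  have "(F ^^ n) x \<in> X" using funpow_in_invariant_set[OF invariant \<open>x \<in> X\<close>] .
  then show ?case
    using Suc.IH dec[OF \<open>(F ^^ n) x \<in> X\<close>] unfolding funpow.simps comp_def sum.lessThan_Suc by linarith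
qed simp

lemma lyapunov_nonincreasing:
  fixes F :: "'a::real_normed_vector \<Rightarrow> 'a" and W :: "'a \<Rightarrow> real"
  assumes invariant: "\<And>x. x \<in> X \<Longrightarrow> F x \<in> X" and \<rho>: "class_K \<rho>"
    and dec: "\<And>x. x \<in> X \<Longrightarrow> W (F x) - W x \<le> - \<rho> (norm (x - xs))"
    and "x \<in> X" "j \<le> k"
  shows "W ((F ^^ k) x) \<le> W ((F ^^ j) x)"
proof -
  have shift: "(F ^^ (k - j)) ((F ^^ j) x) = (F ^^ k) x"
    using \<open>j \<le> k\<close> by (metis comp_apply funpow_add le_add_diff_inverse2)
  have "(\<Sum>i<k - j. \<rho> (norm ((F ^^ i) ((F ^^ j) x) - xs))) \<ge> 0"
    using class_K_nonneg[OF \<rho>] by (simp add: sum_nonneg)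
  moreover have "W ((F ^^ (k - j)) ((F ^^ j) x))
      + (\<Sum>i<k - j. \<rho> (norm ((F ^^ i) ((F ^^ j) x) - xs))) \<le> W ((F ^^ j) x)"
    by (rule lyapunov_decrease_sum[OF invariant dec funpow_in_invariant_set[OF invariant \<open>x \<in> X\<close>]])
  ultimately show ?thesis unfolding shift by linarith
qed

text \<open>While the state is \<epsilon>-far from xs, W stays above \<rho> \<epsilon> > \<alpha> \<theta>, so every earlier
  state is \<theta>-far from xs and each step decreases W by at least \<rho> \<theta>.\<close>
lemma lyapunov_steps_outside_ball:
  fixes F :: "'a::real_normed_vector \<Rightarrow> 'a" and W :: "'a \<Rightarrow> real"
  assumes invariant: "\<And>x. x \<in> X \<Longrightarrow> F x \<in> X"
    and \<rho>: "class_K \<rho>" and \<alpha>: "class_K \<alpha>"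
    and lower: "\<And>x. x \<in> X \<Longrightarrow> \<rho> (norm (x - xs)) \<le> W x"
    and upper: "\<And>x. x \<in> X \<Longrightarrow> W x \<le> \<alpha> (norm (x - xs))"
    and dec: "\<And>x. x \<in> X \<Longrightarrow> W (F x) - W x \<le> - \<rho> (norm (x - xs))"
    and x: "x \<in> X" and "0 \<le> \<epsilon>" "0 \<le> \<theta>" "\<alpha> \<theta> < \<rho> \<epsilon>"
    and far: "\<epsilon> < norm ((F ^^ k) x - xs)"
  shows "(real k + 1) * \<rho> \<theta> \<le> \<alpha> (norm (x - xs))"
proof -
  define e where "e j = norm ((F ^^ j) x - xs)" for j
  have traj_X: "(F ^^ j) x \<in> X" for j using funpow_in_invariant_set[OF invariant x] .
  have "\<rho> \<epsilon> < \<rho> (e k)"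
    using class_K_less[OF \<rho>] \<open>0 \<le> \<epsilon>\<close> far by (simp add: e_def)
  also have "\<dots> \<le> W ((F ^^ k) x)" using lower[OF traj_X] by (simp add: e_def)
  finally have W_k: "\<rho> \<epsilon> < W ((F ^^ k) x)" .
  have "\<rho> \<theta> \<le> \<rho> (e j)" if "j \<le> k" for j
  proof -
    have "W ((F ^^ k) x) \<le> W ((F ^^ j) x)"
      using lyapunov_nonincreasing[OF invariant \<rho> dec x that] .
    then have "\<alpha> \<theta> < \<alpha> (e j)"
      using W_k \<open>\<alpha> \<theta> < \<rho> \<epsilon>\<close> upper[OF traj_X[of j]] unfolding e_def by linarith
    then have "\<theta> < e j"
      using class_K_mono[OF \<alpha>, of "e j" \<theta>] by (force simp: e_def)
    then show ?thesis using class_K_mono[OF \<rho>] \<open>0 \<le> \<theta>\<close> by simp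
  qed
  then have "(real k + 1) * \<rho> \<theta> \<le> (\<Sum>j<Suc k. \<rho> (e j))"
    using sum_mono[of "{..<Suc k}" "\<lambda>_. \<rho> \<theta>" "\<lambda>j. \<rho> (e j)"] by (simp add: add.commute)
  also have "\<dots> \<le> W ((F ^^ Suc k) x) + (\<Sum>j<Suc k. \<rho> (e j))"
    using lower[OF traj_X[of "Suc k"]] class_K_nonneg[OF \<rho>, of "e (Suc k)"] by (simp add: e_def)
  also have "\<dots> \<le> W x"
    unfolding e_def by (rule lyapunov_decrease_sum[OF invariant dec x])
  also have "\<dots> \<le> \<alpha> (norm (x - xs))" using upper[OF x] .
  finally show ?thesis .
qed

lemma lyapunov_uniform_attractivity:
  fixes F :: "'a::real_normed_vector \<Rightarrow> 'a" and W :: "'a \<Rightarrow> real"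
  assumes invariant: "\<And>x. x \<in> X \<Longrightarrow> F x \<in> X"
    and \<rho>: "class_K \<rho>" and \<alpha>: "class_K \<alpha>"
    and lower: "\<And>x. x \<in> X \<Longrightarrow> \<rho> (norm (x - xs)) \<le> W x"
    and upper: "\<And>x. x \<in> X \<Longrightarrow> W x \<le> \<alpha> (norm (x - xs))"
    and dec: "\<And>x. x \<in> X \<Longrightarrow> W (F x) - W x \<le> - \<rho> (norm (x - xs))"
    and "0 < \<epsilon>"
  shows "\<exists>\<mu>>0. \<forall>x \<in> X. \<forall>k. \<alpha> (norm (x - xs)) / (real k + 1) < \<mu>
           \<longrightarrow> norm ((F ^^ k) x - xs) \<le> \<epsilon>"
proof -
  obtain \<theta> where \<theta>: "0 < \<theta>" "\<alpha> \<theta> < \<rho> \<epsilon>"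
    using class_K_small_arg[OF \<alpha> class_K_pos[OF \<rho> \<open>0 < \<epsilon>\<close>]] by blast
  have "norm ((F ^^ k) x - xs) \<le> \<epsilon>"
    if "x \<in> X" and small: "\<alpha> (norm (x - xs)) / (real k + 1) < \<rho> \<theta>" for x k
  proof (rule ccontr)
    assume "\<not> norm ((F ^^ k) x - xs) \<le> \<epsilon>"
    then have "(real k + 1) * \<rho> \<theta> \<le> \<alpha> (norm (x - xs))"
      using \<theta> \<open>0 < \<epsilon>\<close> \<open>x \<in> X\<close>
      by (intro lyapunov_steps_outside_ball[OF invariant \<rho> \<alpha> lower upper dec]) auto
    then show False using small by (simp add: field_simps)
  qed
  then show ?thesis using class_K_pos[OF \<rho> \<theta>(1)] by blast
qed

lemma lyapunov_KL_stability:
  fixes F :: "'a::real_normed_vector \<Rightarrow> 'a" and W :: "'a \<Rightarrow> real"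
  assumes invariant: "\<And>x. x \<in> X \<Longrightarrow> F x \<in> X" and "bounded X"
    and \<rho>: "class_K \<rho>" and \<alpha>: "class_K \<alpha>"
    and lower: "\<And>x. x \<in> X \<Longrightarrow> \<rho> (norm (x - xs)) \<le> W x"
    and upper: "\<And>x. x \<in> X \<Longrightarrow> W x \<le> \<alpha> (norm (x - xs))"
    and dec: "\<And>x. x \<in> X \<Longrightarrow> W (F x) - W x \<le> - \<rho> (norm (x - xs))"
  shows "\<exists>\<beta>. class_KL \<beta> \<and> (\<forall>x \<in> X. \<forall>k. norm ((F ^^ k) x - xs) \<le> \<beta> (norm (x - xs)) (real k))"
proof -
  obtain R where R: "\<And>x. x \<in> X \<Longrightarrow> norm (x - xs) \<le> R"
    using \<open>bounded X\<close> unfolding bounded_any_center[of _ xs] by (metis dist_norm norm_minus_commute)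
  define P where "P = {(\<alpha> (norm (x - xs)) / (real k + 1), norm ((F ^^ k) x - xs)) | x k. x \<in> X}"
  have "\<exists>G. class_K G \<and> (\<forall>(u, y) \<in> P. y \<le> G u)"
  proof (rule class_K_majorant)
    show "0 \<le> u \<and> y \<le> R" if "(u, y) \<in> P" for u y
      using that R funpow_in_invariant_set[OF invariant] class_K_nonneg[OF \<alpha>]
      by (auto simp: P_def)
    show "\<exists>\<delta>>0. \<forall>(u, y) \<in> P. u < \<delta> \<longrightarrow> y \<le> \<epsilon>" if "0 < \<epsilon>" for \<epsilon>
      using lyapunov_uniform_attractivity[OF invariant \<rho> \<alpha> lower upper dec that]
      by (auto simp: P_def)
  qed
  then obtain G where "class_K G" "\<forall>(u, y) \<in> P. y \<le> G u" by blast
  then have "\<forall>x \<in> X. \<forall>k. norm ((F ^^ k) x - xs) \<le> G (\<alpha> (norm (x - xs)) / (real k + 1))"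
    by (auto simp: P_def)
  then show ?thesis
    using class_KL_comp_decay[OF \<open>class_K G\<close> \<alpha>] by blast
qed

lemma traj_0 [simp]: "traj f p x 0 = x"
  by (simp add: traj_def)

lemma traj_Suc: "traj f p x (Suc k) = f (traj f p x k) (p (traj f p x k))"
  by (simp add: traj_def)

lemma traj_Suc_shift: "traj f p x (Suc k) = traj f p (f x (p x)) k"
  by (simp add: traj_def funpow_Suc_right del: funpow.simps)

lemma traj_add: "traj f p (traj f p x n) k = traj f p x (k + n)"
  by (simp add: traj_def funpow_add)

lemma feasible_from_traj: "feasible_from f h p x \<Longrightarrow> feasible_from f h p (traj f p x n)"
  unfolding feasible_from_def traj_add by blast

lemma traj_in_X0set: "feasible_from f h p x \<Longrightarrow> traj f p x n \<in> X0set f h"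
  unfolding X0set_def by (blast intro: feasible_from_traj)

lemma Pi_set_feasible_from: "p \<in> Pi_set f h \<Longrightarrow> x \<in> X0set f h \<Longrightarrow> feasible_from f h p x"
  by (simp add: Pi_set_def)

lemma Pi_set_in_Zset: "p \<in> Pi_set f h \<Longrightarrow> x \<in> X0set f h \<Longrightarrow> (x, p x) \<in> Zset h"
  using Pi_set_feasible_from[of p f h x] unfolding feasible_from_def Zset_def
  by (auto dest: spec[of _ 0])

lemma Pi_set_step_in_X0set: "p \<in> Pi_set f h \<Longrightarrow> x \<in> X0set f h \<Longrightarrow> f x (p x) \<in> X0set f h"
  using traj_in_X0set[OF Pi_set_feasible_from, of p f h x 1] by (simp add: traj_Suc)

text \<open>The correction terms telescope, and \<gamma>^k w k tends to 0.\<close>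
lemma discounted_rotation_sums:
  fixes l w :: "nat \<Rightarrow> real"
  assumes "0 < \<gamma>" "\<gamma> < 1" and "summable (\<lambda>k. \<gamma> ^ k * l k)" and "bounded (range w)"
  shows "(\<lambda>k. \<gamma> ^ k * (l k + w k - \<gamma> * w (Suc k))) sums ((\<Sum>k. \<gamma> ^ k * l k) + w 0)"
proof -
  obtain B where B: "\<And>k. \<bar>w k\<bar> \<le> B" using assms(4) unfolding bounded_real by blast
  have "(\<lambda>k. \<gamma> ^ k * w k) \<longlonglongrightarrow> 0"
  proof (rule Lim_null_comparison)
    show "\<forall>\<^sub>F k in sequentially. norm (\<gamma> ^ k * w k) \<le> \<gamma> ^ k * B"
      using B assms(1) by (auto simp: abs_mult intro!: mult_left_mono)
    show "(\<lambda>k. \<gamma> ^ k * B) \<longlonglongrightarrow> 0"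
      using assms(1,2) by (intro tendsto_mult_left_zero LIMSEQ_power_zero) auto
  qed
  then have "(\<lambda>k. \<gamma> ^ k * w k - \<gamma> ^ Suc k * w (Suc k)) sums (\<gamma> ^ 0 * w 0 - 0)"
    by (rule telescope_sums')
  then have "(\<lambda>k. \<gamma> ^ k * l k + (\<gamma> ^ k * w k - \<gamma> ^ Suc k * w (Suc k)))
      sums ((\<Sum>k. \<gamma> ^ k * l k) + w 0)"
    using summable_sums[OF assms(3)] by (intro sums_add) auto
  then show ?thesis by (simp add: algebra_simps)
qed

lemma cost_rotated_lower_bound:
  assumes "0 < \<gamma>" "\<gamma> < 1" and \<rho>: "class_K \<rho>"
    and feasible: "feasible_from f h p x0" and summable: "summable (cost_terms \<gamma> L f p x0)"
    and lam_bounded: "bounded (lam ` X0set f h)"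
    and dissipative: "\<And>x u. (x, u) \<in> Zset h \<Longrightarrow> \<rho> (norm (x - xs)) \<le> L x u + lam x - \<gamma> * lam (f x u)"
  shows "\<rho> (norm (x0 - xs)) \<le> cost \<gamma> L f p x0 + lam x0"
proof -
  define z where "z k = traj f p x0 k" for k
  define rotated where "rotated k = L (z k) (p (z k)) + lam (z k) - \<gamma> * lam (z (Suc k))" for k
  have z_Z: "(z k, p (z k)) \<in> Zset h" for k
    using feasible unfolding feasible_from_def Zset_def z_def by auto
  have rotated_ge: "\<rho> (norm (z k - xs)) \<le> rotated k" for k
    using dissipative[OF z_Z] unfolding rotated_def z_def traj_Suc by simp
  have "range (\<lambda>k. lam (z k)) \<subseteq> lam ` X0set f h"
    using traj_in_X0set[OF feasible] by (auto simp: z_def)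
  then have "bounded (range (\<lambda>k. lam (z k)))" using lam_bounded bounded_subset by blast
  moreover have "summable (\<lambda>k. \<gamma> ^ k * L (z k) (p (z k)))"
    using summable by (simp add: cost_terms_def[abs_def] z_def)
  ultimately have "(\<lambda>k. \<gamma> ^ k * rotated k) sums ((\<Sum>k. \<gamma> ^ k * L (z k) (p (z k))) + lam (z 0))"
    unfolding rotated_def by (intro discounted_rotation_sums assms(1,2))
  then have "(\<lambda>k. \<gamma> ^ k * rotated k) sums (cost \<gamma> L f p x0 + lam x0)"
    by (simp add: cost_def cost_terms_def[abs_def] z_def)
  moreover have "0 \<le> \<gamma> ^ k * rotated k" for k
    using rotated_ge[of k] class_K_nonneg[OF \<rho>, of "norm (z k - xs)"] assms(1) by simp
  ultimately have "(\<Sum>k\<in>{0}. \<gamma> ^ k * rotated k) \<le> cost \<gamma> L f p x0 + lam x0"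
    using sum_le_suminf[of "\<lambda>k. \<gamma> ^ k * rotated k" "{0}"] by (simp add: sums_iff)
  then show ?thesis using rotated_ge[of 0] by (simp add: z_def)
qed

lemma cost_unfold:
  assumes "summable (cost_terms \<gamma> L f p (f x (p x)))"
  shows "cost \<gamma> L f p x = L x (p x) + \<gamma> * cost \<gamma> L f p (f x (p x))"
proof -
  have "(\<lambda>k. cost_terms \<gamma> L f p x (Suc k)) = (\<lambda>k. \<gamma> * cost_terms \<gamma> L f p (f x (p x)) k)"
    by (simp add: cost_terms_def traj_Suc_shift mult.assoc)
  then have "(\<lambda>k. cost_terms \<gamma> L f p x (Suc k)) sums (\<gamma> * cost \<gamma> L f p (f x (p x)))"
    using sums_mult[OF summable_sums[OF assms]] by (simp add: cost_def)
  then have "cost_terms \<gamma> L f p x sums (\<gamma> * cost \<gamma> L f p (f x (p x)) + cost_terms \<gamma> L f p x 0)"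
    by (simp add: sums_Suc_iff)
  then show ?thesis by (simp add: cost_def sums_iff cost_terms_def[of _ _ _ _ x 0])
qed

lemma optimal_policy_Vstar_eq_cost:
  assumes "optimal_policy \<gamma> L f h p" "x \<in> X0set f h"
  shows "Vstar \<gamma> L f h x = cost \<gamma> L f p x"
  unfolding Vstar_def
  by (rule cInf_eq_minimum) (use assms in \<open>auto simp: optimal_policy_def\<close>)

lemma optimal_policy_bellman:
  assumes opt: "optimal_policy \<gamma> L f h p" and x: "x \<in> X0set f h"
  shows "Vstar \<gamma> L f h x = L x (p x) + \<gamma> * Vstar \<gamma> L f h (f x (p x))"
proof -
  have p: "p \<in> Pi_set f h" using opt by (simp add: optimal_policy_def)
  have next_X0: "f x (p x) \<in> X0set f h" using Pi_set_step_in_X0set[OF p x] .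
  then have "summable (cost_terms \<gamma> L f p (f x (p x)))" using opt by (simp add: optimal_policy_def)
  then show ?thesis
    using cost_unfold optimal_policy_Vstar_eq_cost[OF opt] x next_X0 by metis
qed

lemma steady_state_traj: "f xs us = xs \<Longrightarrow> p xs = us \<Longrightarrow> traj f p xs k = xs"
  by (induction k) (simp_all add: traj_Suc)

lemma steady_state_in_X0set:
  assumes "f xs us = xs" "h xs us \<le> 0"
  shows "xs \<in> X0set f h"
  using steady_state_traj[of f xs us "\<lambda>_. us"] assms
  unfolding X0set_def feasible_from_def by (auto intro!: exI[of _ "\<lambda>_. us"])

lemma Pi_set_rest_at_steady_state:
  assumes p: "p \<in> Pi_set f h" and steady: "f xs us = xs" "h xs us \<le> 0"
  shows "(\<lambda>x. if x = xs then us else p x) \<in> Pi_set f h"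
proof -
  define q where "q = (\<lambda>x. if x = xs then us else p x)"
  have step: "h x (q x) \<le> 0 \<and> f x (q x) \<in> X0set f h" if "x \<in> X0set f h" for x
    using Pi_set_in_Zset[OF p that] Pi_set_step_in_X0set[OF p that] steady
      steady_state_in_X0set[of f xs us h, OF steady]
    by (auto simp: q_def Zset_def)
  have "traj f q x k \<in> X0set f h" if "x \<in> X0set f h" for x k
    using that by (induction k) (auto simp: traj_Suc step)
  then have "q \<in> Pi_set f h"
    unfolding Pi_set_def feasible_from_def using step by blast
  then show ?thesis by (simp only: q_def)
qed

lemma optimal_policy_Vstar_steady_state_nonpos:
  assumes opt: "optimal_policy \<gamma> L f h p"
    and steady: "f xs us = xs" "L xs us = 0" "h xs us \<le> 0"
  shows "Vstar \<gamma> L f h xs \<le> 0"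
proof -
  define q where "q = (\<lambda>x. if x = xs then us else p x)"
  have q: "q \<in> Pi_set f h"
    unfolding q_def using opt steady by (intro Pi_set_rest_at_steady_state) (auto simp: optimal_policy_def)
  have "cost_terms \<gamma> L f q xs = (\<lambda>_. 0)"
    using steady_state_traj[of f xs us q] steady by (auto simp: cost_terms_def q_def)
  then show ?thesis
    using opt q steady_state_in_X0set[of f xs us h, OF steady(1,3)] optimal_policy_Vstar_eq_cost[OF opt]
    unfolding optimal_policy_def by (metis cost_def suminf_zero summable_zero)
qed

lemma optimal_value_rotated_lower_bound:
  assumes "0 < \<gamma>" "\<gamma> < 1" and \<rho>: "class_K \<rho>" and opt: "optimal_policy \<gamma> L f h p"
    and lam_bounded: "bounded (lam ` X0set f h)"
    and dissipative: "\<And>x u. (x, u) \<in> Zset h \<Longrightarrow> \<rho> (norm (x - xs)) \<le> L x u + lam x - \<gamma> * lam (f x u)"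
    and x: "x \<in> X0set f h"
  shows "\<rho> (norm (x - xs)) \<le> Vstar \<gamma> L f h x + lam x"
proof -
  have "p \<in> Pi_set f h" "summable (cost_terms \<gamma> L f p x)"
    using opt x by (auto simp: optimal_policy_def)
  then show ?thesis
    using cost_rotated_lower_bound[OF assms(1,2) \<rho> Pi_set_feasible_from _ lam_bounded dissipative]
      optimal_policy_Vstar_eq_cost[OF opt x] x by simp
qed

lemma optimal_value_rotated_decrease:
  assumes opt: "optimal_policy \<gamma> L f h p" and x: "x \<in> X0set f h"
    and dissipative: "\<And>x u. (x, u) \<in> Zset h \<Longrightarrow> f x u \<in> X0set f h \<Longrightarrow>
          \<rho> (norm (x - xs)) \<le> L x u + lam x - lam (f x u) + (\<gamma> - 1) * Vstar \<gamma> L f h (f x u)"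
  shows "(Vstar \<gamma> L f h (f x (p x)) + lam (f x (p x))) - (Vstar \<gamma> L f h x + lam x)
           \<le> - \<rho> (norm (x - xs))"
proof -
  have p: "p \<in> Pi_set f h" using opt by (simp add: optimal_policy_def)
  show ?thesis
    using dissipative[OF Pi_set_in_Zset[OF p x] Pi_set_step_in_X0set[OF p x]]
      optimal_policy_bellman[OF opt x] by (simp add: algebra_simps)
qed

theorem theorem2:
  fixes f :: "'x::euclidean_space \<Rightarrow> 'u::euclidean_space \<Rightarrow> 'x"
    and h :: "'x \<Rightarrow> 'u \<Rightarrow> 'c::{ord,zero}"
    and L :: "'x \<Rightarrow> 'u \<Rightarrow> real"
    and \<gamma> :: real
    and xs :: 'x and us :: 'u
    and lam :: "'x \<Rightarrow> real"
    and \<rho> :: "real \<Rightarrow> real"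
    and pistar :: "'x \<Rightarrow> 'u"
  assumes gamma: "0 < \<gamma>" "\<gamma> < 1"
    and steady: "f xs us = xs" "L xs us = 0" "h xs us \<le> 0"
    and A1: "compact (Zset h)" "compact (X0set f h)"
    and A2_lam: "isCont lam xs" "\<And>S. bounded S \<Longrightarrow> bounded (lam ` S)" "lam xs = 0"
    and A2_rho: "class_K \<rho>"
    and A2_i: "\<And>x u. (x, u) \<in> Zset h \<Longrightarrow>
                 L x u + lam x - \<gamma> * lam (f x u) \<ge> \<rho> (norm (x - xs))"
    and A2_ii: "\<And>x u. (x, u) \<in> Zset h \<Longrightarrow> f x u \<in> X0set f h \<Longrightarrow>
                 L x u + lam x - lam (f x u) + (\<gamma> - 1) * Vstar \<gamma> L f h (f x u)
                   \<ge> \<rho> (norm (x - xs))"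
    and A3: "continuous (at xs within X0set f h) (Vstar \<gamma> L f h)"
            "bounded (Vstar \<gamma> L f h ` X0set f h)"
    and opt: "optimal_policy \<gamma> L f h pistar"
  shows "(\<forall>x \<in> X0set f h. Vstar \<gamma> L f h x + lam x \<ge> \<rho> (norm (x - xs)))
       \<and> (\<exists>\<alpha>. class_K \<alpha> \<and>
            (\<forall>x \<in> X0set f h. Vstar \<gamma> L f h x + lam x \<le> \<alpha> (norm (x - xs))))
       \<and> (\<forall>x \<in> X0set f h.
            (Vstar \<gamma> L f h (f x (pistar x)) + lam (f x (pistar x)))
              - (Vstar \<gamma> L f h x + lam x) \<le> - \<rho> (norm (x - xs)))
       \<and> (\<exists>\<beta>. class_KL \<beta> \<and>
            (\<forall>x0 \<in> X0set f h. \<forall>k::nat.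
               norm (traj f pistar x0 k - xs) \<le> \<beta> (norm (x0 - xs)) (real k)))"
proof -
  define X0 where "X0 = X0set f h"
  define W where "W x = Vstar \<gamma> L f h x + lam x" for x
  have lam_bounded: "bounded (lam ` X0)"
    using A1(2) A2_lam(2) compact_imp_bounded unfolding X0_def by blast
  have step: "f x (pistar x) \<in> X0" if "x \<in> X0" for x
    using Pi_set_step_in_X0set opt that by (auto simp: X0_def optimal_policy_def)
  have lower: "\<rho> (norm (x - xs)) \<le> W x" if "x \<in> X0" for x
    using optimal_value_rotated_lower_bound[OF gamma A2_rho opt _ A2_i] lam_bounded that
    by (simp add: W_def X0_def)
  have decrease: "W (f x (pistar x)) - W x \<le> - \<rho> (norm (x - xs))" if "x \<in> X0" for x
    using optimal_value_rotated_decrease[OF opt _ A2_ii] that by (simp add: W_def X0_def)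
  have "W xs = 0"
    using lower[of xs] steady_state_in_X0set[of f xs us h, OF steady(1,3)]
      optimal_policy_Vstar_steady_state_nonpos[OF opt steady] A2_lam(3) A2_rho
    by (simp add: W_def X0_def class_K_def)
  moreover have "continuous (at xs within X0) W"
    unfolding W_def X0_def
    using A3(1) continuous_at_imp_continuous_within[OF A2_lam(1)] by (rule continuous_add)
  moreover have "bounded (W ` X0)"
    unfolding W_def using bounded_plus_comp A3(2) lam_bounded by (simp add: X0_def)
  ultimately obtain \<alpha> where \<alpha>: "class_K \<alpha>" and upper: "\<forall>x \<in> X0. W x \<le> \<alpha> (norm (x - xs))"
    using class_K_bound_at_continuity_point by metis
  have "\<exists>\<beta>. class_KL \<beta> \<and>
      (\<forall>x0 \<in> X0. \<forall>k. norm (((\<lambda>x. f x (pistar x)) ^^ k) x0 - xs) \<le> \<beta> (norm (x0 - xs)) (real k))"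
    using A1(2) compact_imp_bounded upper decrease
    by (intro lyapunov_KL_stability[OF step _ A2_rho \<alpha> lower]) (auto simp: X0_def)
  then show ?thesis
    using lower upper decrease \<alpha> unfolding W_def X0_def traj_def by blast
qed

end
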